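(* Let $\{X_n\}_{n\ge0}$ be a time-homogeneous discrete-time Markov chain with countably infinite state space $\mathcal{X}=\{x_i\}_{i\in\mathbb{N}}$ and transition probabilities $p_{ik}=\mathbb{P}(X_{n+1}=x_k\mid X_n=x_i)$. Let $\mathcal{A}_{\mathcal{X}}$ be a real separable Hilbert space with orthonormal basis $\{e_i\}_{i\in\mathbb{N}}$, and set $c_{ki}:=p_{ik}$. Then: (a) the product $v\cdot w:=\sum_{k=1}^\infty\big(\sum_{i=1}^\infty v_iw_ic_{ki}\big)e_k$ defines a Hilbert evolution algebra structure on $\mathcal{A}_{\mathcal{X}}$ with orthonormal natural basis $\{e_i\}$ and structure constants $c_{ki}$ (a Markov Hilbert evolution algebra); (b) if moreover there exist positive reals $\alpha_k,\beta_i$ ($i,k\in\mathbb{N}$) and $M_1,M_2>0$ with $\sum_{k=1}^\infty p_{ik}\alpha_k\le M_1\beta_i$ for all $i$ and $\sum_{i=1}^\infty p_{ik}\beta_i\le M_2\alpha_k$ for all $k$, then the evolution operator $C$ has domain $D(C)=\mathcal{A}_{\mathcal{X}}$, is bounded with $\|C\|\le(M_1M_2)^{1/2}$, and for every $n\ge1$ and $i\in\mathbb{N}$, $$C^n(e_i)=\sum_{k=1}^\infty p^{(n)}_{ik}e_k,\qquad p^{(n)}_{ik}:=\mathbb{P}(X_n=x_k\mid X_0=x_i).$$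
   Context: A (separable) Hilbert evolution algebra is a real or complex separable Hilbert space $(\mathcal{A},\langle\cdot,\cdot\rangle)$ equipped with a bilinear product $\cdot$ such that: (i) there exist an orthonormal basis $\{e_i\}_{i\in\mathbb{N}}$ (an orthonormal natural basis) and scalars $\{c_{ki}\}$ (structure constants) with $e_i\cdot e_i=\sum_{k=1}^\infty c_{ki}e_k$ and $e_i\cdot e_j=0$ for $i\neq j$; (ii) every left multiplication $L_v(w)=v\cdot w$ is a bounded operator on $\mathcal{A}$. The evolution operator is the linear operator $C:D(C)\to\mathcal{A}$ with domain $D(C)=\{v=\sum_iv_ie_i:\ \sum_{k=1}^\infty|\sum_{i=1}^\infty v_ic_{ki}|^2<\infty\}$ and $C(v)=\sum_{k=1}^\infty\big(\sum_{i=1}^\infty v_ic_{ki}\big)e_k$. *)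

theory Defs
  imports "HOL-Analysis.Analysis"
begin

definition coord :: "(nat \<Rightarrow> 'a::real_inner) \<Rightarrow> 'a \<Rightarrow> nat \<Rightarrow> real" where
  "coord e v i = inner v (e i)"

definition orthonormal_basis :: "(nat \<Rightarrow> 'a::{real_inner,complete_space}) \<Rightarrow> bool" where
  "orthonormal_basis e \<longleftrightarrow>
     (\<forall>i j. inner (e i) (e j) = (if i = j then 1 else 0)) \<and>
     closure (span (range e)) = UNIV"

definition hilbert_evolution_algebra ::
  "('a \<Rightarrow> 'a \<Rightarrow> 'a) \<Rightarrow> (nat \<Rightarrow> 'a::{real_inner,complete_space}) \<Rightarrow> (nat \<Rightarrow> nat \<Rightarrow> real) \<Rightarrow> bool" where
  "hilbert_evolution_algebra prd e c \<longleftrightarrow>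
     orthonormal_basis e \<and>
     bilinear prd \<and>
     (\<forall>i. (\<lambda>k. c k i *\<^sub>R e k) sums prd (e i) (e i)) \<and>
     (\<forall>i j. i \<noteq> j \<longrightarrow> prd (e i) (e j) = 0) \<and>
     (\<forall>v. bounded_linear (prd v))"

definition evo_dom :: "(nat \<Rightarrow> 'a::real_inner) \<Rightarrow> (nat \<Rightarrow> nat \<Rightarrow> real) \<Rightarrow> 'a set" where
  "evo_dom e c = {v. (\<forall>k. summable (\<lambda>i. coord e v i * c k i)) \<and>
                     summable (\<lambda>k. (\<Sum>i. coord e v i * c k i)\<^sup>2)}"

definition evo_op :: "(nat \<Rightarrow> 'a::real_inner) \<Rightarrow> (nat \<Rightarrow> nat \<Rightarrow> real) \<Rightarrow> 'a \<Rightarrow> 'a" where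
  "evo_op e c v = (\<Sum>k. (\<Sum>i. coord e v i * c k i) *\<^sub>R e k)"

text \<open>Transition matrix of a time-homogeneous Markov chain on states x_0, x_1, ...:
  p i k = P(X_{n+1} = x_k | X_n = x_i).\<close>
definition stochastic_matrix :: "(nat \<Rightarrow> nat \<Rightarrow> real) \<Rightarrow> bool" where
  "stochastic_matrix p \<longleftrightarrow> (\<forall>i k. 0 \<le> p i k) \<and> (\<forall>i. (\<lambda>k. p i k) sums 1)"

text \<open>n-step transition probabilities p^(n)_ik = P(X_n = x_k | X_0 = x_i),
  given by the Chapman-Kolmogorov recursion.\<close>
fun n_step :: "(nat \<Rightarrow> nat \<Rightarrow> real) \<Rightarrow> nat \<Rightarrow> nat \<Rightarrow> nat \<Rightarrow> real" where
  "n_step p 0 i k = (if i = k then 1 else 0)"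
| "n_step p (Suc n) i k = (\<Sum>j. n_step p n i j * p j k)"

definition markov_prod :: "(nat \<Rightarrow> 'a::real_inner) \<Rightarrow> (nat \<Rightarrow> nat \<Rightarrow> real) \<Rightarrow> 'a \<Rightarrow> 'a \<Rightarrow> 'a" where
  "markov_prod e p v w = (\<Sum>k. (\<Sum>i. coord e v i * coord e w i * p i k) *\<^sub>R e k)"

end

theory Submission
  imports Defs
begin

text \<open>Both \<open>w \<mapsto> v \<cdot> w\<close> and the evolution operator act on coordinates through real
  matrices, so everything reduces to bounding matrices on \<open>\<ell>\<^sup>2\<close>. For the product the matrix
  is \<open>v\<^sub>i p\<^sub>i\<^sub>k\<close>, and since \<open>p\<close> is stochastic its action on \<open>w\<close> has squared \<open>\<ell>\<^sup>2\<close> norm at most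
  \<open>(\<Sum>\<^sub>i |v\<^sub>i w\<^sub>i|)\<^sup>2 \<le> \<parallel>v\<parallel>\<^sup>2 \<parallel>w\<parallel>\<^sup>2\<close>. For the evolution operator, Schur's test with the weights
  \<open>\<alpha>\<close> and \<open>\<beta>\<close> gives \<open>\<parallel>C\<parallel> \<le> \<surd>(M\<^sub>1 M\<^sub>2)\<close>. Once \<open>C\<close> is defined everywhere, the coordinates of
  \<open>C\<^sup>n e\<^sub>i\<close> satisfy the Chapman-Kolmogorov recursion defining the n-step probabilities.\<close>

definition orthonormal_seq :: "(nat \<Rightarrow> 'a::real_inner) \<Rightarrow> bool" where
  "orthonormal_seq e \<longleftrightarrow> (\<forall>i j. inner (e i) (e j) = (if i = j then 1 else 0))"

lemma orthonormal_seqD: "orthonormal_seq e \<Longrightarrow> inner (e i) (e j) = (if i = j then 1 else 0)"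
  by (simp add: orthonormal_seq_def)

lemma orthonormal_basis_imp_orthonormal_seq: "orthonormal_basis e \<Longrightarrow> orthonormal_seq e"
  by (simp add: orthonormal_basis_def orthonormal_seq_def)

lemma coord_basis: "orthonormal_seq e \<Longrightarrow> coord e (e i) j = (if i = j then 1 else 0)"
  by (simp add: coord_def orthonormal_seqD)

lemma coord_add: "coord e (x + y) i = coord e x i + coord e y i"
  by (simp add: coord_def inner_add_left)

lemma coord_scaleR: "coord e (r *\<^sub>R x) i = r * coord e x i"
  by (simp add: coord_def)

lemma norm_sum_orthonormal_sq:
  assumes "orthonormal_seq e" and "finite A"
  shows "(norm (\<Sum>k\<in>A. c k *\<^sub>R e k))\<^sup>2 = (\<Sum>k\<in>A. (c k)\<^sup>2)"
proof -
  have "\<And>x b. (x::real) * (if b then 1 else 0) = (if b then x else 0)" by simp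
  then show ?thesis
    using assms unfolding power2_norm_eq_inner
    by (simp add: inner_sum_left inner_sum_right orthonormal_seqD power2_eq_square)
qed

lemma sum_coord_sq_le:
  assumes "orthonormal_seq e"
  shows "(\<Sum>k<n. (coord e v k)\<^sup>2) \<le> (norm v)\<^sup>2"
proof -
  define u where "u = (\<Sum>k<n. coord e v k *\<^sub>R e k)"
  have norm_u: "(norm u)\<^sup>2 = (\<Sum>k<n. (coord e v k)\<^sup>2)"
    unfolding u_def by (rule norm_sum_orthonormal_sq[OF assms]) simp
  have inner_u: "inner v u = (\<Sum>k<n. (coord e v k)\<^sup>2)"
    unfolding u_def by (simp add: coord_def inner_sum_right power2_eq_square)
  have "0 \<le> (norm (v - u))\<^sup>2" by simp
  also have "\<dots> = (norm v)\<^sup>2 - 2 * inner v u + (norm u)\<^sup>2"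
    by (simp add: power2_norm_eq_inner inner_diff_left inner_diff_right inner_commute)
  finally show ?thesis using norm_u inner_u by simp
qed

lemma summable_coord_sq: "orthonormal_seq e \<Longrightarrow> summable (\<lambda>k. (coord e v k)\<^sup>2)"
  by (rule summableI_nonneg_bounded[where x="(norm v)\<^sup>2"]) (auto intro: sum_coord_sq_le)

lemma suminf_coord_sq_le: "orthonormal_seq e \<Longrightarrow> (\<Sum>k. (coord e v k)\<^sup>2) \<le> (norm v)\<^sup>2"
  by (intro suminf_le_const summable_coord_sq sum_coord_sq_le)

lemma summable_orthonormal_series:
  fixes e :: "nat \<Rightarrow> 'a::{real_inner,complete_space}"
  assumes ON: "orthonormal_seq e" and sq: "summable (\<lambda>k. (c k)\<^sup>2)"
  shows "summable (\<lambda>k. c k *\<^sub>R e k)"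
proof -
  define S where "S n = (\<Sum>k<n. c k *\<^sub>R e k)" for n
  define T where "T n = (\<Sum>k<n. (c k)\<^sup>2)" for n
  have dist_le: "(norm (S m - S n))\<^sup>2 = T m - T n" if "n \<le> m" for m n
  proof -
    have sub: "{..<n} \<subseteq> {..<m}" using that by auto
    have "S m - S n = (\<Sum>k\<in>{..<m} - {..<n}. c k *\<^sub>R e k)"
      unfolding S_def by (rule sum_diff[OF _ sub, symmetric]) simp
    moreover have "T m - T n = (\<Sum>k\<in>{..<m} - {..<n}. (c k)\<^sup>2)"
      unfolding T_def by (rule sum_diff[OF _ sub, symmetric]) simp
    ultimately show ?thesis using norm_sum_orthonormal_sq[OF ON, of "{..<m} - {..<n}" c] by simp
  qed
  have dist_abs: "(norm (S m - S n))\<^sup>2 = \<bar>T m - T n\<bar>" for m n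
  proof (cases "n \<le> m")
    case True
    moreover have "T n \<le> T m" unfolding T_def by (rule sum_mono2) (use True in auto)
    ultimately show ?thesis using dist_le by simp
  next
    case False
    moreover have "T m \<le> T n" unfolding T_def by (rule sum_mono2) (use False in auto)
    ultimately show ?thesis using dist_le[of m n] by (simp add: norm_minus_commute)
  qed
  have "Cauchy T"
    using sq unfolding T_def by (simp add: summable_iff_convergent convergent_Cauchy)
  have "Cauchy S"
  proof (rule CauchyI)
    fix r :: real assume r: "0 < r"
    from \<open>Cauchy T\<close> obtain M where M: "\<forall>m\<ge>M. \<forall>n\<ge>M. norm (T m - T n) < r\<^sup>2"
      using r unfolding Cauchy_iff by (meson zero_less_power)
    have "norm (S m - S n) < r" if "M \<le> m" "M \<le> n" for m n
    proof -
      have "(norm (S m - S n))\<^sup>2 < r\<^sup>2" using M that dist_abs by auto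
      then show ?thesis using r by (simp add: power_less_imp_less_base)
    qed
    then show "\<exists>M. \<forall>m\<ge>M. \<forall>n\<ge>M. norm (S m - S n) < r" by blast
  qed
  then show ?thesis unfolding summable_iff_convergent S_def by (simp add: Cauchy_convergent_iff)
qed

lemma norm_orthonormal_series_sq:
  fixes e :: "nat \<Rightarrow> 'a::{real_inner,complete_space}"
  assumes ON: "orthonormal_seq e" and sq: "summable (\<lambda>k. (c k)\<^sup>2)"
  shows "(norm (\<Sum>k. c k *\<^sub>R e k))\<^sup>2 = (\<Sum>k. (c k)\<^sup>2)"
proof -
  have "(\<lambda>n. (norm (\<Sum>k<n. c k *\<^sub>R e k))\<^sup>2) \<longlonglongrightarrow> (norm (\<Sum>k. c k *\<^sub>R e k))\<^sup>2"
    by (intro tendsto_intros summable_LIMSEQ summable_orthonormal_series[OF ON sq])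
  moreover have "(\<lambda>n. (norm (\<Sum>k<n. c k *\<^sub>R e k))\<^sup>2) = (\<lambda>n. \<Sum>k<n. (c k)\<^sup>2)"
    by (intro ext norm_sum_orthonormal_sq[OF ON]) simp
  ultimately show ?thesis using summable_LIMSEQ[OF sq] LIMSEQ_unique by metis
qed

lemma coord_of_sums:
  assumes "orthonormal_seq e" and "(\<lambda>k. c k *\<^sub>R e k) sums w"
  shows "coord e w j = c j"
proof -
  have "(\<lambda>n. inner (\<Sum>k<n. c k *\<^sub>R e k) (e j)) \<longlonglongrightarrow> inner w (e j)"
    using assms(2) unfolding sums_def by (intro tendsto_intros)
  moreover have "inner (\<Sum>k<n. c k *\<^sub>R e k) (e j) = (if j < n then c j else 0)" for n
    using assms(1) by (simp add: inner_sum_left orthonormal_seqD if_distrib cong: if_cong)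
  moreover have "(\<lambda>n. if j < n then c j else 0) \<longlonglongrightarrow> c j"
    by (rule tendsto_eventually) (auto simp: eventually_sequentially intro: exI[of _ "Suc j"])
  ultimately show ?thesis unfolding coord_def using LIMSEQ_unique by fastforce
qed

lemma
  fixes x y :: "nat \<Rightarrow> real"
  assumes sx: "summable (\<lambda>i. (x i)\<^sup>2)" and sy: "summable (\<lambda>i. (y i)\<^sup>2)"
  shows summable_abs_mult_of_sq: "summable (\<lambda>i. \<bar>x i * y i\<bar>)"
    and Cauchy_Schwarz_ineq_suminf:
      "(\<Sum>i. \<bar>x i * y i\<bar>)\<^sup>2 \<le> (\<Sum>i. (x i)\<^sup>2) * (\<Sum>i. (y i)\<^sup>2)"
proof -
  have "\<bar>x i * y i\<bar> \<le> (x i)\<^sup>2 + (y i)\<^sup>2" for i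
    using sum_squares_bound[of "\<bar>x i\<bar>" "\<bar>y i\<bar>"]
    by (simp add: abs_mult) (metis abs_ge_zero mult_nonneg_nonneg mult_2 mult.assoc order_trans le_add_same_cancel1)
  then show sum: "summable (\<lambda>i. \<bar>x i * y i\<bar>)"
    by (intro summable_comparison_test[OF _ summable_add[OF sx sy]]) auto
  have "(\<Sum>i<n. \<bar>x i * y i\<bar>)\<^sup>2 \<le> (\<Sum>i. (x i)\<^sup>2) * (\<Sum>i. (y i)\<^sup>2)" for n
  proof -
    have "(\<Sum>i<n. \<bar>x i * y i\<bar>)\<^sup>2 = (\<Sum>i<n. \<bar>x i\<bar> * \<bar>y i\<bar>)\<^sup>2" by (simp add: abs_mult)
    also have "\<dots> \<le> (\<Sum>i<n. \<bar>x i\<bar>\<^sup>2) * (\<Sum>i<n. \<bar>y i\<bar>\<^sup>2)" by (rule Cauchy_Schwarz_ineq_sum)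
    also have "\<dots> = (\<Sum>i<n. (x i)\<^sup>2) * (\<Sum>i<n. (y i)\<^sup>2)" by simp
    also have "\<dots> \<le> (\<Sum>i. (x i)\<^sup>2) * (\<Sum>i. (y i)\<^sup>2)"
      by (intro mult_mono sum_le_suminf sx sy sum_nonneg suminf_nonneg) auto
    finally show ?thesis .
  qed
  moreover have "(\<lambda>n. (\<Sum>i<n. \<bar>x i * y i\<bar>)\<^sup>2) \<longlonglongrightarrow> (\<Sum>i. \<bar>x i * y i\<bar>)\<^sup>2"
    by (intro tendsto_intros summable_LIMSEQ sum)
  ultimately show "(\<Sum>i. \<bar>x i * y i\<bar>)\<^sup>2 \<le> (\<Sum>i. (x i)\<^sup>2) * (\<Sum>i. (y i)\<^sup>2)"
    by (intro LIMSEQ_le_const2) auto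
qed

lemma
  fixes f :: "nat \<Rightarrow> nat \<Rightarrow> real"
  assumes nonneg: "\<And>i k. 0 \<le> f i k" and rows: "\<And>i. summable (f i)"
    and row_sums: "summable (\<lambda>i. suminf (f i))"
  shows summable_column_of_nonneg: "summable (\<lambda>i. f i k)"
    and summable_column_sums_of_nonneg: "summable (\<lambda>k. \<Sum>i. f i k)"
    and suminf_column_sums_le: "(\<Sum>k. \<Sum>i. f i k) \<le> (\<Sum>i. \<Sum>k. f i k)"
proof -
  show col: "summable (\<lambda>i. f i k)" for k
  proof (rule summable_comparison_test[OF _ row_sums])
    have "f i k \<le> suminf (f i)" for i
      using sum_le_suminf[OF rows, of "{k}" i] nonneg by auto
    then show "\<exists>N. \<forall>n\<ge>N. norm (f n k) \<le> suminf (f n)" using nonneg by auto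
  qed
  have partial: "(\<Sum>k<K. \<Sum>i. f i k) \<le> (\<Sum>i. \<Sum>k. f i k)" for K
  proof -
    have "(\<Sum>k<K. \<Sum>i. f i k) = (\<Sum>i. \<Sum>k<K. f i k)"
      by (rule suminf_sum[symmetric]) (use col in auto)
    also have "\<dots> \<le> (\<Sum>i. \<Sum>k. f i k)"
      by (intro suminf_le sum_le_suminf rows summable_sum col row_sums) (auto simp: nonneg)
    finally show ?thesis .
  qed
  show "summable (\<lambda>k. \<Sum>i. f i k)"
    by (rule summableI_nonneg_bounded[OF _ partial]) (auto intro: suminf_nonneg col nonneg)
  then show "(\<Sum>k. \<Sum>i. f i k) \<le> (\<Sum>i. \<Sum>k. f i k)"
    using partial by (rule suminf_le_const)
qed

lemma
  fixes x w \<beta> :: "nat \<Rightarrow> real"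
  assumes w: "\<And>i. 0 \<le> w i" and \<beta>: "\<And>i. 0 < \<beta> i"
    and sw: "summable (\<lambda>i. w i * \<beta> i)" and sx: "summable (\<lambda>i. (x i)\<^sup>2 * w i / \<beta> i)"
  shows summable_abs_mult_weighted: "summable (\<lambda>i. \<bar>x i * w i\<bar>)"
    and weighted_Cauchy_Schwarz_ineq_suminf:
      "(\<Sum>i. \<bar>x i * w i\<bar>)\<^sup>2 \<le> (\<Sum>i. w i * \<beta> i) * (\<Sum>i. (x i)\<^sup>2 * w i / \<beta> i)"
proof -
  define X where "X i = sqrt (w i * \<beta> i)" for i
  define Y where "Y i = \<bar>x i\<bar> * sqrt (w i / \<beta> i)" for i
  have X2: "(\<lambda>i. (X i)\<^sup>2) = (\<lambda>i. w i * \<beta> i)"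
    unfolding X_def using w \<beta> by (simp add: less_imp_le)
  have Y2: "(\<lambda>i. (Y i)\<^sup>2) = (\<lambda>i. (x i)\<^sup>2 * w i / \<beta> i)"
    unfolding Y_def using w \<beta> by (simp add: power_mult_distrib less_imp_le)
  have XY: "(\<lambda>i. \<bar>X i * Y i\<bar>) = (\<lambda>i. \<bar>x i * w i\<bar>)"
  proof
    fix i
    have "sqrt (w i * \<beta> i) * sqrt (w i / \<beta> i) = sqrt ((w i)\<^sup>2)"
      using \<beta>[of i] by (simp add: real_sqrt_mult[symmetric] power2_eq_square)
    then show "\<bar>X i * Y i\<bar> = \<bar>x i * w i\<bar>"
      unfolding X_def Y_def using w[of i] by (simp add: abs_mult mult.left_commute)
  qed
  show "summable (\<lambda>i. \<bar>x i * w i\<bar>)"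
    using summable_abs_mult_of_sq[of X Y] sw sx unfolding X2 Y2 XY by simp
  show "(\<Sum>i. \<bar>x i * w i\<bar>)\<^sup>2 \<le> (\<Sum>i. w i * \<beta> i) * (\<Sum>i. (x i)\<^sup>2 * w i / \<beta> i)"
    using Cauchy_Schwarz_ineq_suminf[of X Y] sw sx unfolding X2 Y2 XY by simp
qed

definition l2_bounded_matrix :: "(nat \<Rightarrow> nat \<Rightarrow> real) \<Rightarrow> real \<Rightarrow> bool" where
  "l2_bounded_matrix c K \<longleftrightarrow>
     (\<forall>x. summable (\<lambda>i. (x i)\<^sup>2) \<longrightarrow>
        (\<forall>k. summable (\<lambda>i. x i * c k i)) \<and>
        summable (\<lambda>k. (\<Sum>i. x i * c k i)\<^sup>2) \<and>
        (\<Sum>k. (\<Sum>i. x i * c k i)\<^sup>2) \<le> K\<^sup>2 * (\<Sum>i. (x i)\<^sup>2))"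

lemma l2_bounded_matrixI:
  assumes "\<And>x. summable (\<lambda>i. (x i)\<^sup>2) \<Longrightarrow>
      (\<forall>k. summable (\<lambda>i. x i * c k i)) \<and>
      summable (\<lambda>k. (\<Sum>i. x i * c k i)\<^sup>2) \<and>
      (\<Sum>k. (\<Sum>i. x i * c k i)\<^sup>2) \<le> K\<^sup>2 * (\<Sum>i. (x i)\<^sup>2)"
  shows "l2_bounded_matrix c K"
  using assms unfolding l2_bounded_matrix_def by blast

lemma
  assumes "l2_bounded_matrix c K" and "summable (\<lambda>i. (x i)\<^sup>2)"
  shows l2_bounded_matrix_row_summable: "summable (\<lambda>i. x i * c k i)"
    and l2_bounded_matrix_summable: "summable (\<lambda>k. (\<Sum>i. x i * c k i)\<^sup>2)"
    and l2_bounded_matrix_suminf_le: "(\<Sum>k. (\<Sum>i. x i * c k i)\<^sup>2) \<le> K\<^sup>2 * (\<Sum>i. (x i)\<^sup>2)"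
  using assms unfolding l2_bounded_matrix_def by blast+

lemma
  fixes c :: "nat \<Rightarrow> nat \<Rightarrow> real" and \<alpha> \<beta> :: "nat \<Rightarrow> real"
  assumes c: "\<And>k i. 0 \<le> c k i" and \<alpha>: "\<And>k. 0 < \<alpha> k" and \<beta>: "\<And>i. 0 < \<beta> i"
    and row: "\<And>i. summable (\<lambda>k. c k i * \<alpha> k)" and row_le: "\<And>i. (\<Sum>k. c k i * \<alpha> k) \<le> M1 * \<beta> i"
    and sx: "summable (\<lambda>i. (x i)\<^sup>2)"
  shows summable_schur_column: "summable (\<lambda>i. (x i)\<^sup>2 * c k i / \<beta> i)"
    and summable_schur_columns: "summable (\<lambda>k. \<alpha> k * (\<Sum>i. (x i)\<^sup>2 * c k i / \<beta> i))"
    and suminf_schur_columns_le: "(\<Sum>k. \<alpha> k * (\<Sum>i. (x i)\<^sup>2 * c k i / \<beta> i)) \<le> M1 * (\<Sum>i. (x i)\<^sup>2)"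
proof -
  have entry_le: "c k i * \<alpha> k \<le> M1 * \<beta> i" for k i
    using sum_le_suminf[OF row, of "{k}" i] row_le[of i] c \<alpha> by (simp add: less_imp_le)
  show summable_y: "summable (\<lambda>i. (x i)\<^sup>2 * c k i / \<beta> i)" for k
  proof (rule summable_comparison_test[OF _ summable_mult[OF sx, of "M1 / \<alpha> k"]])
    have "c k i / \<beta> i \<le> M1 / \<alpha> k" for i
      using entry_le[of k i] \<alpha>[of k] \<beta>[of i] by (simp add: divide_simps mult.commute)
    then have "(x i)\<^sup>2 * c k i / \<beta> i \<le> M1 / \<alpha> k * (x i)\<^sup>2" for i
      using mult_left_mono[of "c k i / \<beta> i" "M1 / \<alpha> k" "(x i)\<^sup>2"] by (simp add: ac_simps)
    then show "\<exists>N. \<forall>i\<ge>N. norm ((x i)\<^sup>2 * c k i / \<beta> i) \<le> M1 / \<alpha> k * (x i)\<^sup>2"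
      using c \<beta> by (auto simp: less_imp_le)
  qed
  define f where "f i k = (x i)\<^sup>2 / \<beta> i * (c k i * \<alpha> k)" for i k
  have f: "0 \<le> f i k" for i k unfolding f_def using c \<alpha> \<beta> by (simp add: less_imp_le)
  have summable_f: "summable (f i)" for i unfolding f_def by (intro summable_mult row)
  have suminf_f_le: "suminf (f i) \<le> M1 * (x i)\<^sup>2" for i
  proof -
    have "suminf (f i) = (x i)\<^sup>2 / \<beta> i * (\<Sum>k. c k i * \<alpha> k)"
      unfolding f_def by (rule suminf_mult[OF row])
    also have "\<dots> \<le> (x i)\<^sup>2 / \<beta> i * (M1 * \<beta> i)"
      by (rule mult_left_mono[OF row_le]) (use \<beta>[of i] in simp)
    finally show ?thesis using \<beta>[of i] by (simp add: mult.commute)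
  qed
  have summable_row_sums: "summable (\<lambda>i. suminf (f i))"
    by (rule summable_comparison_test[OF _ summable_mult[OF sx, of M1]])
       (use suminf_f_le suminf_nonneg[OF summable_f f] in auto)
  have column_f: "(\<Sum>i. f i k) = \<alpha> k * (\<Sum>i. (x i)\<^sup>2 * c k i / \<beta> i)" for k
  proof -
    have "(\<lambda>i. f i k) = (\<lambda>i. \<alpha> k * ((x i)\<^sup>2 * c k i / \<beta> i))" unfolding f_def by (simp add: ac_simps)
    then show ?thesis using suminf_mult[OF summable_y[of k], of "\<alpha> k"] by simp
  qed
  show "summable (\<lambda>k. \<alpha> k * (\<Sum>i. (x i)\<^sup>2 * c k i / \<beta> i))"
    using summable_column_sums_of_nonneg[OF f summable_f summable_row_sums] by (simp add: column_f)
  have "(\<Sum>k. \<Sum>i. f i k) \<le> (\<Sum>i. \<Sum>k. f i k)"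
    by (rule suminf_column_sums_le[OF f summable_f summable_row_sums])
  also have "\<dots> \<le> (\<Sum>i. M1 * (x i)\<^sup>2)"
    by (rule suminf_le[OF suminf_f_le summable_row_sums summable_mult[OF sx]])
  finally show "(\<Sum>k. \<alpha> k * (\<Sum>i. (x i)\<^sup>2 * c k i / \<beta> i)) \<le> M1 * (\<Sum>i. (x i)\<^sup>2)"
    by (simp add: column_f suminf_mult[OF sx])
qed

lemma schur_test:
  fixes c :: "nat \<Rightarrow> nat \<Rightarrow> real" and \<alpha> \<beta> :: "nat \<Rightarrow> real"
  assumes c: "\<And>k i. 0 \<le> c k i" and \<alpha>: "\<And>k. 0 < \<alpha> k" and \<beta>: "\<And>i. 0 < \<beta> i"
    and row: "\<And>i. summable (\<lambda>k. c k i * \<alpha> k)" and row_le: "\<And>i. (\<Sum>k. c k i * \<alpha> k) \<le> M1 * \<beta> i"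
    and col: "\<And>k. summable (\<lambda>i. c k i * \<beta> i)" and col_le: "\<And>k. (\<Sum>i. c k i * \<beta> i) \<le> M2 * \<alpha> k"
    and M1: "0 \<le> M1" and M2: "0 \<le> M2"
  shows "l2_bounded_matrix c (sqrt (M1 * M2))"
proof (rule l2_bounded_matrixI)
  fix x :: "nat \<Rightarrow> real" assume sx: "summable (\<lambda>i. (x i)\<^sup>2)"
  define y where "y k = (\<Sum>i. (x i)\<^sup>2 * c k i / \<beta> i)" for k
  note summable_y = summable_schur_column[OF c \<alpha> \<beta> row row_le sx]
  have summable_columns: "summable (\<lambda>k. \<alpha> k * y k)"
    unfolding y_def by (rule summable_schur_columns[OF c \<alpha> \<beta> row row_le sx])
  have abs_row: "summable (\<lambda>i. \<bar>x i * c k i\<bar>)" for k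
    by (rule summable_abs_mult_weighted[OF c \<beta> col summable_y])
  define b where "b k = (\<Sum>i. x i * c k i)" for k
  have b_sq_le: "(b k)\<^sup>2 \<le> M2 * (\<alpha> k * y k)" for k
  proof -
    have "\<bar>b k\<bar> \<le> (\<Sum>i. \<bar>x i * c k i\<bar>)" unfolding b_def by (rule summable_rabs[OF abs_row])
    then have "(b k)\<^sup>2 \<le> (\<Sum>i. \<bar>x i * c k i\<bar>)\<^sup>2"
      using power_mono[of "\<bar>b k\<bar>" _ 2] by simp
    also have "\<dots> \<le> (\<Sum>i. c k i * \<beta> i) * y k"
      unfolding y_def by (rule weighted_Cauchy_Schwarz_ineq_suminf[OF c \<beta> col summable_y])
    also have "\<dots> \<le> (M2 * \<alpha> k) * y k"
      by (rule mult_right_mono[OF col_le]) (use c \<beta> in \<open>auto simp: y_def less_imp_le intro!: suminf_nonneg summable_y\<close>)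
    finally show ?thesis by (simp add: ac_simps)
  qed
  have summable_b_sq: "summable (\<lambda>k. (b k)\<^sup>2)"
    by (rule summable_comparison_test[OF _ summable_mult[OF summable_columns, of M2]])
       (use b_sq_le in auto)
  have "(\<Sum>k. (b k)\<^sup>2) \<le> M2 * (\<Sum>k. \<alpha> k * y k)"
    using suminf_le[OF b_sq_le summable_b_sq summable_mult[OF summable_columns]]
    by (simp add: suminf_mult[OF summable_columns])
  also have "\<dots> \<le> M2 * (M1 * (\<Sum>i. (x i)\<^sup>2))"
    unfolding y_def by (rule mult_left_mono[OF suminf_schur_columns_le[OF c \<alpha> \<beta> row row_le sx] M2])
  also have "\<dots> = (sqrt (M1 * M2))\<^sup>2 * (\<Sum>i. (x i)\<^sup>2)" using M1 M2 by simp
  finally have "(\<Sum>k. (b k)\<^sup>2) \<le> (sqrt (M1 * M2))\<^sup>2 * (\<Sum>i. (x i)\<^sup>2)" .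
  with summable_b_sq summable_rabs_cancel[OF abs_row]
  show "(\<forall>k. summable (\<lambda>i. x i * c k i)) \<and> summable (\<lambda>k. (\<Sum>i. x i * c k i)\<^sup>2) \<and>
      (\<Sum>k. (\<Sum>i. x i * c k i)\<^sup>2) \<le> (sqrt (M1 * M2))\<^sup>2 * (\<Sum>i. (x i)\<^sup>2)"
    unfolding b_def by blast
qed

lemma stochastic_matrixD:
  assumes "stochastic_matrix p"
  shows "0 \<le> p i k" and "summable (p i)" and "suminf (p i) = 1"
  using assms unfolding stochastic_matrix_def by (auto intro: sums_summable sums_unique[symmetric])

text \<open>Each image coordinate is at most \<open>\<Sum>i. a i\<close> and, by Tonelli, so is the sum of all
  image coordinates; hence the sum of their squares is at most \<open>(\<Sum>i. a i)\<^sup>2\<close>.\<close>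
lemma
  fixes a :: "nat \<Rightarrow> real"
  assumes p: "stochastic_matrix p" and a: "\<And>i. 0 \<le> a i" and sa: "summable a"
  shows summable_stochastic_image: "summable (\<lambda>i. a i * p i k)"
    and summable_stochastic_image_sq: "summable (\<lambda>k. (\<Sum>i. a i * p i k)\<^sup>2)"
    and suminf_stochastic_image_sq_le: "(\<Sum>k. (\<Sum>i. a i * p i k)\<^sup>2) \<le> (\<Sum>i. a i)\<^sup>2"
proof -
  define f where "f i k = a i * p i k" for i k
  have f: "0 \<le> f i k" for i k unfolding f_def using a stochastic_matrixD(1)[OF p] by simp
  have summable_f: "summable (f i)" for i
    unfolding f_def by (intro summable_mult stochastic_matrixD(2)[OF p])
  have row_sum: "suminf (f i) = a i" for i
    unfolding f_def using suminf_mult[OF stochastic_matrixD(2)[OF p]] stochastic_matrixD(3)[OF p] by simp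
  define B where "B k = (\<Sum>i. f i k)" for k
  have B: "0 \<le> B k" for k unfolding B_def
    by (intro suminf_nonneg summable_column_of_nonneg[OF f summable_f] f) (simp add: row_sum sa)
  have summable_B: "summable B"
    unfolding B_def using summable_column_sums_of_nonneg[OF f summable_f] sa by (simp add: row_sum)
  have suminf_B: "(\<Sum>k. B k) \<le> (\<Sum>i. a i)"
    unfolding B_def using suminf_column_sums_le[OF f summable_f] sa by (simp add: row_sum)
  have B_sq_le: "(B k)\<^sup>2 \<le> (\<Sum>i. a i) * B k" for k
  proof -
    have "B k \<le> (\<Sum>i. a i)"
      using sum_le_suminf[OF summable_B, of "{k}"] B suminf_B by fastforce
    then show ?thesis using B[of k] by (simp add: power2_eq_square mult_right_mono)
  qed
  show "summable (\<lambda>i. a i * p i k)" for k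
    using summable_column_of_nonneg[OF f summable_f] sa by (simp add: row_sum f_def)
  show summable_B_sq: "summable (\<lambda>k. (\<Sum>i. a i * p i k)\<^sup>2)"
    unfolding f_def[symmetric] B_def[symmetric]
    by (rule summable_comparison_test[OF _ summable_mult[OF summable_B]]) (use B_sq_le in auto)
  have "(\<Sum>k. (B k)\<^sup>2) \<le> (\<Sum>k. (\<Sum>i. a i) * B k)"
    by (rule suminf_le[OF B_sq_le _ summable_mult[OF summable_B]])
       (use summable_B_sq in \<open>simp add: B_def f_def\<close>)
  also have "\<dots> \<le> (\<Sum>i. a i) * (\<Sum>i. a i)"
    using suminf_mult[OF summable_B] suminf_B suminf_nonneg[OF sa a] by (simp add: mult_left_mono)
  finally show "(\<Sum>k. (\<Sum>i. a i * p i k)\<^sup>2) \<le> (\<Sum>i. a i)\<^sup>2"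
    by (simp add: B_def f_def power2_eq_square)
qed

lemma l2_bounded_matrix_stochastic_weighted:
  assumes p: "stochastic_matrix p" and sx: "summable (\<lambda>i. (x i)\<^sup>2)"
  shows "l2_bounded_matrix (\<lambda>k i. x i * p i k) (sqrt (\<Sum>i. (x i)\<^sup>2))"
proof (rule l2_bounded_matrixI)
  fix y :: "nat \<Rightarrow> real" assume sy: "summable (\<lambda>i. (y i)\<^sup>2)"
  define a where "a i = \<bar>y i * x i\<bar>" for i
  have a: "0 \<le> a i" for i by (simp add: a_def)
  have sa: "summable a" unfolding a_def by (rule summable_abs_mult_of_sq[OF sy sx])
  have abs_entry: "\<bar>y i * (x i * p i k)\<bar> = a i * p i k" for i k
    using stochastic_matrixD(1)[OF p] by (simp add: a_def abs_mult)
  have abs_row: "summable (\<lambda>i. \<bar>y i * (x i * p i k)\<bar>)" for k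
    unfolding abs_entry by (rule summable_stochastic_image[OF p a sa])
  have row_sq_le: "(\<Sum>i. y i * (x i * p i k))\<^sup>2 \<le> (\<Sum>i. a i * p i k)\<^sup>2" for k
  proof -
    have "\<bar>\<Sum>i. y i * (x i * p i k)\<bar> \<le> (\<Sum>i. a i * p i k)"
      using summable_rabs[OF abs_row] unfolding abs_entry .
    then show ?thesis using power_mono[of "\<bar>\<Sum>i. y i * (x i * p i k)\<bar>" _ 2] by simp
  qed
  have summable_sq: "summable (\<lambda>k. (\<Sum>i. y i * (x i * p i k))\<^sup>2)"
    by (rule summable_comparison_test[OF _ summable_stochastic_image_sq[OF p a sa]])
       (use row_sq_le in auto)
  have "(\<Sum>k. (\<Sum>i. y i * (x i * p i k))\<^sup>2) \<le> (\<Sum>k. (\<Sum>i. a i * p i k)\<^sup>2)"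
    by (rule suminf_le[OF row_sq_le summable_sq summable_stochastic_image_sq[OF p a sa]])
  also have "\<dots> \<le> (\<Sum>i. a i)\<^sup>2" by (rule suminf_stochastic_image_sq_le[OF p a sa])
  also have "\<dots> \<le> (\<Sum>i. (y i)\<^sup>2) * (\<Sum>i. (x i)\<^sup>2)"
    unfolding a_def by (rule Cauchy_Schwarz_ineq_suminf[OF sy sx])
  also have "\<dots> = (sqrt (\<Sum>i. (x i)\<^sup>2))\<^sup>2 * (\<Sum>i. (y i)\<^sup>2)"
    using suminf_nonneg[OF sx] by simp
  finally show "(\<forall>k. summable (\<lambda>i. y i * (x i * p i k))) \<and>
      summable (\<lambda>k. (\<Sum>i. y i * (x i * p i k))\<^sup>2) \<and>
      (\<Sum>k. (\<Sum>i. y i * (x i * p i k))\<^sup>2) \<le> (sqrt (\<Sum>i. (x i)\<^sup>2))\<^sup>2 * (\<Sum>i. (y i)\<^sup>2)"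
    using summable_rabs_cancel[OF abs_row] summable_sq by blast
qed

lemma
  assumes ON: "orthonormal_seq e" and c: "l2_bounded_matrix c K"
  shows summable_coord_row: "summable (\<lambda>i. coord e v i * c k i)"
    and summable_coord_rows_sq: "summable (\<lambda>k. (\<Sum>i. coord e v i * c k i)\<^sup>2)"
    and suminf_coord_rows_sq_le: "(\<Sum>k. (\<Sum>i. coord e v i * c k i)\<^sup>2) \<le> (K * norm v)\<^sup>2"
proof -
  note sq = summable_coord_sq[OF ON]
  show "summable (\<lambda>i. coord e v i * c k i)" by (rule l2_bounded_matrix_row_summable[OF c sq])
  show "summable (\<lambda>k. (\<Sum>i. coord e v i * c k i)\<^sup>2)" by (rule l2_bounded_matrix_summable[OF c sq])
  have "(\<Sum>k. (\<Sum>i. coord e v i * c k i)\<^sup>2) \<le> K\<^sup>2 * (\<Sum>i. (coord e v i)\<^sup>2)"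
    by (rule l2_bounded_matrix_suminf_le[OF c sq])
  also have "\<dots> \<le> K\<^sup>2 * (norm v)\<^sup>2"
    by (rule mult_left_mono[OF suminf_coord_sq_le[OF ON]]) simp
  finally show "(\<Sum>k. (\<Sum>i. coord e v i * c k i)\<^sup>2) \<le> (K * norm v)\<^sup>2"
    by (simp add: power_mult_distrib)
qed

lemma
  fixes e :: "nat \<Rightarrow> 'a::{real_inner,complete_space}"
  assumes ON: "orthonormal_seq e" and c: "l2_bounded_matrix c K" and K: "0 \<le> K"
  shows evo_dom_eq_UNIV: "evo_dom e c = UNIV"
    and evo_op_sums: "(\<lambda>k. (\<Sum>i. coord e v i * c k i) *\<^sub>R e k) sums evo_op e c v"
    and bounded_linear_evo_op: "bounded_linear (evo_op e c)"
    and onorm_evo_op_le: "onorm (evo_op e c) \<le> K"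
proof -
  note rows = summable_coord_row[OF ON c] and summable_sq = summable_coord_rows_sq[OF ON c]
  show "evo_dom e c = UNIV" unfolding evo_dom_def using rows summable_sq by blast
  show sums: "(\<lambda>k. (\<Sum>i. coord e v i * c k i) *\<^sub>R e k) sums evo_op e c v" for v
    unfolding evo_op_def by (intro summable_sums summable_orthonormal_series[OF ON summable_sq])
  have norm_le: "norm (evo_op e c v) \<le> K * norm v" for v
  proof (rule power2_le_imp_le)
    show "(norm (evo_op e c v))\<^sup>2 \<le> (K * norm v)\<^sup>2"
      using norm_orthonormal_series_sq[OF ON summable_sq] suminf_coord_rows_sq_le[OF ON c, of v]
      unfolding evo_op_def by simp
  qed (use K in simp)
  have row_add: "(\<Sum>i. coord e (x + y) i * c k i) = (\<Sum>i. coord e x i * c k i) + (\<Sum>i. coord e y i * c k i)"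
    for x y k
  proof -
    have "(\<Sum>i. coord e (x + y) i * c k i) = (\<Sum>i. coord e x i * c k i + coord e y i * c k i)"
      by (simp add: coord_add distrib_right)
    also have "\<dots> = (\<Sum>i. coord e x i * c k i) + (\<Sum>i. coord e y i * c k i)"
      by (rule suminf_add[symmetric, OF rows rows])
    finally show ?thesis .
  qed
  have row_scaleR: "(\<Sum>i. coord e (r *\<^sub>R x) i * c k i) = r * (\<Sum>i. coord e x i * c k i)"
    for r x k
  proof -
    have "(\<Sum>i. coord e (r *\<^sub>R x) i * c k i) = (\<Sum>i. r * (coord e x i * c k i))"
      by (simp add: coord_scaleR mult.assoc)
    also have "\<dots> = r * (\<Sum>i. coord e x i * c k i)" by (rule suminf_mult[OF rows])
    finally show ?thesis .
  qed
  show "bounded_linear (evo_op e c)"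
  proof (rule bounded_linear_intro[where K=K])
    show "evo_op e c (x + y) = evo_op e c x + evo_op e c y" for x y
    proof (rule sums_unique2[OF sums[of "x + y"]])
      show "(\<lambda>k. (\<Sum>i. coord e (x + y) i * c k i) *\<^sub>R e k) sums (evo_op e c x + evo_op e c y)"
        using sums_add[OF sums[of x] sums[of y]] by (simp add: row_add scaleR_add_left)
    qed
    show "evo_op e c (r *\<^sub>R x) = r *\<^sub>R evo_op e c x" for r x
    proof (rule sums_unique2[OF sums[of "r *\<^sub>R x"]])
      show "(\<lambda>k. (\<Sum>i. coord e (r *\<^sub>R x) i * c k i) *\<^sub>R e k) sums (r *\<^sub>R evo_op e c x)"
        using sums_scaleR_right[OF sums[of x], of r] by (simp add: row_scaleR)
    qed
    show "norm (evo_op e c x) \<le> norm x * K" for x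
      using norm_le[of x] by (simp add: mult.commute)
  qed
  show "onorm (evo_op e c) \<le> K" by (rule onorm_bound[OF K norm_le])
qed

lemma markov_prod_eq_evo_op: "markov_prod e p v = evo_op e (\<lambda>k i. coord e v i * p i k)"
  unfolding markov_prod_def evo_op_def by (simp add: ac_simps)

lemma markov_prod_commute: "markov_prod e p v w = markov_prod e p w v"
  unfolding markov_prod_def by (simp add: ac_simps)

lemma
  fixes e :: "nat \<Rightarrow> 'a::{real_inner,complete_space}"
  assumes ON: "orthonormal_seq e" and p: "stochastic_matrix p"
  shows summable_markov_prod_coeff: "summable (\<lambda>i. coord e v i * coord e w i * p i k)"
    and markov_prod_sums:
      "(\<lambda>k. (\<Sum>i. coord e v i * coord e w i * p i k) *\<^sub>R e k) sums markov_prod e p v w"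
    and bounded_linear_markov_prod: "bounded_linear (markov_prod e p v)"
proof -
  have c: "l2_bounded_matrix (\<lambda>k i. coord e v i * p i k) (sqrt (\<Sum>i. (coord e v i)\<^sup>2))"
    by (rule l2_bounded_matrix_stochastic_weighted[OF p summable_coord_sq[OF ON]])
  have K: "0 \<le> sqrt (\<Sum>i. (coord e v i)\<^sup>2)" by (intro real_sqrt_ge_zero suminf_nonneg summable_coord_sq[OF ON]) simp
  have "summable (\<lambda>i. coord e w i * (coord e v i * p i k))"
    by (rule l2_bounded_matrix_row_summable[OF c summable_coord_sq[OF ON]])
  then show "summable (\<lambda>i. coord e v i * coord e w i * p i k)" by (simp add: ac_simps)
  show "(\<lambda>k. (\<Sum>i. coord e v i * coord e w i * p i k) *\<^sub>R e k) sums markov_prod e p v w"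
    using evo_op_sums[OF ON c K, of w] unfolding markov_prod_eq_evo_op by (simp add: ac_simps)
  show "bounded_linear (markov_prod e p v)"
    unfolding markov_prod_eq_evo_op by (rule bounded_linear_evo_op[OF ON c K])
qed

lemma hilbert_evolution_algebra_markov_prod:
  fixes e :: "nat \<Rightarrow> 'a::{real_inner,complete_space}"
  assumes e: "orthonormal_basis e" and p: "stochastic_matrix p"
  shows "hilbert_evolution_algebra (markov_prod e p) e (\<lambda>k i. p i k)"
  unfolding hilbert_evolution_algebra_def
proof (intro conjI allI impI)
  have ON: "orthonormal_seq e" by (rule orthonormal_basis_imp_orthonormal_seq[OF e])
  show "orthonormal_basis e" by (rule e)
  show bl: "bounded_linear (markov_prod e p v)" for v
    by (rule bounded_linear_markov_prod[OF ON p])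
  show "bilinear (markov_prod e p)"
    unfolding bilinear_def
  proof (intro conjI allI)
    show "linear (markov_prod e p v)" for v by (rule bounded_linear.linear[OF bl])
    show "linear (\<lambda>v. markov_prod e p v w)" for w
      using bounded_linear.linear[OF bl[of w]] by (simp add: markov_prod_commute[of e p _ w])
  qed
  show "(\<lambda>k. p i k *\<^sub>R e k) sums markov_prod e p (e i) (e i)" for i
  proof -
    have "(\<lambda>j. coord e (e i) j * coord e (e i) j * p j k) = (\<lambda>j. if j = i then p j k else 0)" for k
      by (auto simp: coord_basis[OF ON])
    then have "(\<Sum>j. coord e (e i) j * coord e (e i) j * p j k) = p i k" for k
      using sums_unique[OF sums_single[of i "\<lambda>j. p j k"]] by simp
    then show ?thesis using markov_prod_sums[OF ON p, of "e i" "e i"] by simp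
  qed
  show "markov_prod e p (e i) (e j) = 0" if "i \<noteq> j" for i j
  proof -
    have "(\<lambda>l. coord e (e i) l * coord e (e j) l * p l k) = (\<lambda>l. 0)" for k
      using that by (auto simp: coord_basis[OF ON])
    then show ?thesis unfolding markov_prod_def by simp
  qed
qed

lemma evo_op_power_basis:
  assumes ON: "orthonormal_seq e"
    and sums: "\<And>v. (\<lambda>k. (\<Sum>j. coord e v j * p j k) *\<^sub>R e k) sums evo_op e (\<lambda>k j. p j k) v"
  shows "(\<lambda>k. n_step p n i k *\<^sub>R e k) sums ((evo_op e (\<lambda>k j. p j k) ^^ n) (e i))"
proof (induction n)
  case 0
  have "(\<lambda>k. n_step p 0 i k *\<^sub>R e k) = (\<lambda>k. if k = i then e k else 0)" by auto
  then show ?case using sums_single[of i e] by simp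
next
  case (Suc n)
  have "coord e ((evo_op e (\<lambda>k j. p j k) ^^ n) (e i)) j = n_step p n i j" for j
    by (rule coord_of_sums[OF ON Suc.IH])
  then show ?case using sums[of "(evo_op e (\<lambda>k j. p j k) ^^ n) (e i)"] by simp
qed

lemma
  fixes e :: "nat \<Rightarrow> 'a::{real_inner,complete_space}"
  assumes ON: "orthonormal_seq e" and p: "stochastic_matrix p"
    and \<alpha>: "\<And>k. 0 < \<alpha> k" and \<beta>: "\<And>i. 0 < \<beta> i" and M1: "0 \<le> M1" and M2: "0 \<le> M2"
    and row: "\<And>i. summable (\<lambda>k. p i k * \<alpha> k)" and row_le: "\<And>i. (\<Sum>k. p i k * \<alpha> k) \<le> M1 * \<beta> i"
    and col: "\<And>k. summable (\<lambda>i. p i k * \<beta> i)" and col_le: "\<And>k. (\<Sum>i. p i k * \<beta> i) \<le> M2 * \<alpha> k"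
  shows evo_dom_markov: "evo_dom e (\<lambda>k i. p i k) = UNIV"
    and bounded_linear_evo_op_markov: "bounded_linear (evo_op e (\<lambda>k i. p i k))"
    and onorm_evo_op_markov_le: "onorm (evo_op e (\<lambda>k i. p i k)) \<le> sqrt (M1 * M2)"
    and evo_op_markov_power_basis:
      "(\<lambda>k. n_step p n i k *\<^sub>R e k) sums ((evo_op e (\<lambda>k i. p i k) ^^ n) (e i))"
proof -
  have c: "l2_bounded_matrix (\<lambda>k i. p i k) (sqrt (M1 * M2))"
    by (rule schur_test[of "\<lambda>k i. p i k" \<alpha> \<beta>])
       (use stochastic_matrixD(1)[OF p] \<alpha> \<beta> row row_le col col_le M1 M2 in auto)
  have K: "0 \<le> sqrt (M1 * M2)" using M1 M2 by simp
  show "evo_dom e (\<lambda>k i. p i k) = UNIV" by (rule evo_dom_eq_UNIV[OF ON c K])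
  show "bounded_linear (evo_op e (\<lambda>k i. p i k))" by (rule bounded_linear_evo_op[OF ON c K])
  show "onorm (evo_op e (\<lambda>k i. p i k)) \<le> sqrt (M1 * M2)" by (rule onorm_evo_op_le[OF ON c K])
  show "(\<lambda>k. n_step p n i k *\<^sub>R e k) sums ((evo_op e (\<lambda>k i. p i k) ^^ n) (e i))"
    by (rule evo_op_power_basis[OF ON evo_op_sums[OF ON c K]])
qed

theorem mainTheorem4:
  fixes e :: "nat \<Rightarrow> 'a::{real_inner,complete_space}"
    and p :: "nat \<Rightarrow> nat \<Rightarrow> real"
  assumes "orthonormal_basis e"
    and "stochastic_matrix p"
  shows "(\<forall>v w. (\<forall>k. summable (\<lambda>i. coord e v i * coord e w i * p i k)) \<and>
                (\<lambda>k. (\<Sum>i. coord e v i * coord e w i * p i k) *\<^sub>R e k) sums markov_prod e p v w) \<and>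
         hilbert_evolution_algebra (markov_prod e p) e (\<lambda>k i. p i k) \<and>
         (\<forall>(\<alpha>::nat \<Rightarrow> real) (\<beta>::nat \<Rightarrow> real) (M1::real) (M2::real).
            (\<forall>k. 0 < \<alpha> k) \<and> (\<forall>i. 0 < \<beta> i) \<and> 0 < M1 \<and> 0 < M2 \<and>
            (\<forall>i. summable (\<lambda>k. p i k * \<alpha> k) \<and> (\<Sum>k. p i k * \<alpha> k) \<le> M1 * \<beta> i) \<and>
            (\<forall>k. summable (\<lambda>i. p i k * \<beta> i) \<and> (\<Sum>i. p i k * \<beta> i) \<le> M2 * \<alpha> k)
          \<longrightarrow> evo_dom e (\<lambda>k i. p i k) = UNIV \<and>
              bounded_linear (evo_op e (\<lambda>k i. p i k)) \<and>
              onorm (evo_op e (\<lambda>k i. p i k)) \<le> sqrt (M1 * M2) \<and>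
              (\<forall>n\<ge>1. \<forall>i. (\<lambda>k. n_step p n i k *\<^sub>R e k) sums ((evo_op e (\<lambda>k i. p i k) ^^ n) (e i))))"
proof -
  have ON: "orthonormal_seq e" by (rule orthonormal_basis_imp_orthonormal_seq[OF assms(1)])
  note p = assms(2)
  show ?thesis
  proof (intro conjI allI impI, goal_cases)
    case (1 v w k) show ?case by (rule summable_markov_prod_coeff[OF ON p])
  next
    case (2 v w) show ?case by (rule markov_prod_sums[OF ON p])
  next
    case 3 show ?case by (rule hilbert_evolution_algebra_markov_prod[OF assms])
  next
    case (4 \<alpha> \<beta> M1 M2) then show ?case using evo_dom_markov[OF ON p, of \<alpha> \<beta> M1 M2] by auto
  next
    case (5 \<alpha> \<beta> M1 M2) then show ?case using bounded_linear_evo_op_markov[OF ON p, of \<alpha> \<beta> M1 M2] by auto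
  next
    case (6 \<alpha> \<beta> M1 M2) then show ?case using onorm_evo_op_markov_le[OF ON p, of \<alpha> \<beta> M1 M2] by auto
  next
    case (7 \<alpha> \<beta> M1 M2 n i)
    then show ?case using evo_op_markov_power_basis[OF ON p, of \<alpha> \<beta> M1 M2 n i] by auto
  qed
qed

end
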